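(* Let $k\ge4$ be an integer, $\eta\in[\eta_{k+1},\eta_k)$, and $j\ge k$ an integer. Then $\Theta_j(\eta)>0$, where $\Theta_j(\eta)=(1-|a|^4)\sin\eta+|a|^{j+1}\sin(j\eta)$.
   Context: For $\eta\in(0,\pi/3)$ let $|a|=\frac{1}{2\cos\eta}$. For integers $k\ge1$ let $\Phi_k(\eta)=(1-|a|^4)\sin((k-1)\eta)-|a|^3\sin((k-2)\eta)+|a|^k\sin\eta$. For each integer $k\ge4$, $\Phi_k$ has a unique zero in $(\pi/k,\pi/(k-1))$, denoted $\eta_k$. *)

theory Defs
  imports Complex_Main
begin

definition absa :: "real \<Rightarrow> real" where
  "absa \<eta> = 1 / (2 * cos \<eta>)"

definition Phi :: "nat \<Rightarrow> real \<Rightarrow> real" where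
  "Phi k \<eta> = (1 - absa \<eta> ^ 4) * sin ((real k - 1) * \<eta>)
     - absa \<eta> ^ 3 * sin ((real k - 2) * \<eta>) + absa \<eta> ^ k * sin \<eta>"

definition eta :: "nat \<Rightarrow> real" where
  "eta k = (THE x. pi / real k < x \<and> x < pi / (real k - 1) \<and> Phi k x = 0)"

definition Theta :: "nat \<Rightarrow> real \<Rightarrow> real" where
  "Theta j \<eta> = (1 - absa \<eta> ^ 4) * sin \<eta> + absa \<eta> ^ (j + 1) * sin (real j * \<eta>)"

end

theory Submission
  imports Defs
begin

(* Write A = |a|. For k >= 5, on [pi/k, pi/(k-1)] we have eta <= pi/4, hence A^2 <= 1/2, and
   this makes the derivative of Phi_k negative there; since Phi_k changes sign between the
   endpoints, eta_k is its only root in that interval, so eta lies in (pi/(k+1), pi/(k-1)).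
   There Theta_j(eta) >= (1 - A^4) sin eta - A^(k+1) > (5/4)/(k+1) - 0.71^(k+1) > 0.
   For k = 4 the identity A^2 Phi_4 = sin eta (1 - A^2)(1 - 2 A^4) shows that eta_4 is the
   point of (pi/4, pi/3) where A^4 = 1/2, so A^4 < 1/2 below eta_4. Then
   Theta_4 = sin eta (1 + A^2 - 3 A^4) > 0, while for j >= 5 the lower bound
   (1 - A^4) sin eta - A^6 is still positive. *)

lemma sin_ge_cubic:
  fixes x :: real
  assumes "0 \<le> x"
  shows "x - x ^ 3 / 6 \<le> sin x"
proof -
  have "\<bar>sin x - x\<bar> \<le> x ^ 3 / 6"
    using Maclaurin_sin_bound[of x 3] assms
    by (simp add: sin_coeff_def numeral_3_eq_3 lessThan_Suc field_simps)
  then show ?thesis by linarith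
qed

lemma cos_ge_quadratic: "1 - x ^ 2 / 2 \<le> cos (x :: real)"
proof -
  have "cos x = 1 - 2 * sin (x / 2) ^ 2"
    using cos_double_sin[of "x / 2"] by simp
  moreover have "sin (x / 2) ^ 2 \<le> (x / 2) ^ 2"
    using abs_sin_x_le_abs_x[of "x / 2"] abs_le_square_iff by blast
  ultimately show ?thesis by (simp add: power_divide)
qed

lemma ex1_root_sign_change:
  fixes f :: "real \<Rightarrow> real"
  assumes ab: "a \<le> b" and cont: "continuous_on {a..b} f" and inj: "inj_on f {a..b}"
    and sign: "f a * f b < 0"
  shows "\<exists>!x. a < x \<and> x < b \<and> f x = 0"
proof -
  have "\<exists>x. a \<le> x \<and> x \<le> b \<and> f x = 0"
  proof (cases "f a < 0")
    case True
    then show ?thesis using IVT'[OF _ _ ab cont] sign by (simp add: mult_less_0_iff)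
  next
    case False
    then show ?thesis using IVT2'[OF _ _ ab cont] sign by (simp add: mult_less_0_iff)
  qed
  then obtain x where x: "a \<le> x" "x \<le> b" "f x = 0" by blast
  with sign have "a < x \<and> x < b \<and> f x = 0"
    by (metis mult_zero_left mult_zero_right order_less_irrefl order_le_less)
  moreover have "y = x" if "a < y \<and> y < b \<and> f y = 0" for y
    using inj_onD[OF inj, of y x] that x by auto
  ultimately show ?thesis by blast
qed

lemma absa_times_cos: "cos x \<noteq> 0 \<Longrightarrow> 2 * absa x * cos x = 1"
  by (simp add: absa_def)

lemma absa_pos: "\<bar>x\<bar> < pi / 2 \<Longrightarrow> 0 < absa x"
  by (simp add: absa_def cos_gt_zero_pi)

lemma absa_strict_mono:
  assumes "0 \<le> x" "x < y" "y < pi / 2"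
  shows "absa x < absa y"
proof -
  have "0 < cos y" "cos y < cos x"
    using assms by (auto intro: cos_gt_zero_pi cos_monotone_0_pi)
  then show ?thesis by (simp add: absa_def divide_strict_left_mono)
qed

lemma DERIV_absa:
  assumes "cos x \<noteq> 0"
  shows "(absa has_real_derivative 2 * absa x ^ 2 * sin x) (at x)"
proof -
  have "((\<lambda>x. 1 / (2 * cos x)) has_real_derivative 2 * absa x ^ 2 * sin x) (at x)"
    by (rule derivative_eq_intros refl | simp add: assms)+
       (use assms in \<open>simp add: absa_def power2_eq_square field_simps\<close>)
  then show ?thesis by (simp add: absa_def[abs_def])
qed

lemma absa_bounds:
  assumes "0 \<le> x" "x \<le> pi / 4"
  shows "0 < absa x" "absa x ^ 2 \<le> 1 / 2" "absa x \<le> 71 / 100"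
proof -
  have c: "sqrt 2 / 2 \<le> cos x"
    using cos_monotone_0_pi_le[of x "pi / 4"] assms by (simp add: cos_45)
  have "0 < sqrt 2 / 2" by simp
  with c have "0 < cos x" by linarith
  moreover have "1 / 2 \<le> cos x ^ 2"
    using power_mono[OF c, of 2] by (simp add: power_divide)
  ultimately show "0 < absa x" and sq: "absa x ^ 2 \<le> 1 / 2"
    by (simp_all add: absa_def power_divide field_simps)
  show "absa x \<le> 71 / 100"
  proof (rule ccontr)
    assume "\<not> ?thesis"
    then have "(71 / 100) ^ 2 < absa x ^ 2" by (intro power_strict_mono) auto
    with sq show False by (simp add: power2_eq_square)
  qed
qed

lemma absa_pow_le_half_pow:
  assumes "0 \<le> x" "x \<le> pi / 4" "2 * m \<le> n"
  shows "absa x ^ n \<le> (1 / 2) ^ m"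
proof -
  note A = absa_bounds[OF assms(1,2)]
  have "absa x ^ n \<le> absa x ^ (2 * m)"
    using A assms(3) by (intro power_decreasing) auto
  also have "\<dots> = (absa x ^ 2) ^ m" by (simp add: power_mult)
  also have "\<dots> \<le> (1 / 2) ^ m"
    using A by (intro power_mono) auto
  finally show ?thesis .
qed

definition Phi_deriv :: "nat \<Rightarrow> real \<Rightarrow> real" where
  "Phi_deriv k x = - 8 * absa x ^ 5 * sin x * sin ((real k - 1) * x)
     + (1 - absa x ^ 4) * (real k - 1) * cos ((real k - 1) * x)
     - 6 * absa x ^ 4 * sin x * sin ((real k - 2) * x)
     - (real k - 2) * absa x ^ 3 * cos ((real k - 2) * x)
     + 2 * real k * absa x ^ (k + 1) * sin x ^ 2 + absa x ^ k * cos x"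

lemma DERIV_Phi:
  assumes "cos x \<noteq> 0" "k \<ge> 1"
  shows "(Phi k has_real_derivative Phi_deriv k x) (at x)"
proof -
  obtain m where k: "k = Suc m" using assms(2) by (cases k) auto
  have "((\<lambda>x. (1 - absa x ^ 4) * sin ((real k - 1) * x) - absa x ^ 3 * sin ((real k - 2) * x)
       + absa x ^ k * sin x) has_real_derivative Phi_deriv k x) (at x)"
    apply (rule derivative_eq_intros DERIV_absa[OF assms(1)] refl)+
    unfolding Phi_deriv_def k
    apply (simp add: power_Suc)
    apply (simp add: algebra_simps power2_eq_square)
    apply (simp add: eval_nat_numeral algebra_simps)
    done
  then show ?thesis by (simp add: Phi_def[abs_def])
qed

lemma pi_div_le_pi_div_4:
  fixes n :: real
  assumes "4 \<le> n"
  shows "0 < pi / n" "pi / n \<le> pi / 4"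
proof -
  show "0 < pi / n" using assms by simp
  show "pi / n \<le> pi / 4" using assms by (intro divide_left_mono) auto
qed

lemma cos_le_on_Phi_interval:
  assumes k: "k \<ge> 5" and x: "pi / real k \<le> x" "x \<le> pi / (real k - 1)"
  shows "cos ((real k - 1) * x) \<le> - 68 / 100"
proof -
  define y where "y = pi - (real k - 1) * x"
  have "0 \<le> y" using x k by (simp add: y_def field_simps)
  have "(real k - 1) * (pi / real k) \<le> (real k - 1) * x"
    using x k by (intro mult_left_mono) auto
  then have "y \<le> pi - (real k - 1) * (pi / real k)" by (simp add: y_def)
  also have "\<dots> = pi / real k" using k by (simp add: field_simps)
  also have "\<dots> \<le> 4 / 5" using k pi_less_4 by (simp add: field_simps)
  finally have "y ^ 2 \<le> (4 / 5) ^ 2" using \<open>0 \<le> y\<close> by (intro power_mono)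
  then have "68 / 100 \<le> cos y" using cos_ge_quadratic[of y] by (simp add: power2_eq_square)
  then show ?thesis by (simp add: y_def)
qed

lemma Phi_deriv_leading_term_le:
  assumes k: "k \<ge> 5" and x: "pi / real k \<le> x" "x \<le> pi / (real k - 1)"
  shows "(1 - absa x ^ 4) * (real k - 1) * cos ((real k - 1) * x) \<le> - 51 / 100 * (real k - 1)"
proof -
  have "0 < pi / real k" "pi / (real k - 1) \<le> pi / 4"
    using pi_div_le_pi_div_4[of "real k"] pi_div_le_pi_div_4[of "real k - 1"] k by auto
  with x have "0 \<le> x" "x \<le> pi / 4" by linarith+
  then have "absa x ^ 4 \<le> 1 / 4"
    using absa_pow_le_half_pow[of x 2 4] by (simp add: power_divide)
  moreover note cos = cos_le_on_Phi_interval[OF k x]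
  ultimately have "(1 - absa x ^ 4) * (real k - 1) * cos ((real k - 1) * x)
      \<le> (3 / 4) * (real k - 1) * cos ((real k - 1) * x)"
    using k by (intro mult_right_mono_neg mult_right_mono) auto
  also have "\<dots> \<le> (3 / 4) * (real k - 1) * (- 68 / 100)"
    using cos k by (intro mult_left_mono) auto
  finally show ?thesis by simp
qed

lemma Phi_deriv_neg:
  assumes k: "k \<ge> 5" and x: "pi / real k \<le> x" "x \<le> pi / (real k - 1)"
  shows "Phi_deriv k x < 0"
proof -
  define A where "A = absa x"
  have "0 < pi / real k" "pi / (real k - 1) \<le> pi / 4"
    using pi_div_le_pi_div_4[of "real k"] pi_div_le_pi_div_4[of "real k - 1"] k by auto
  with x have "0 < x" "x \<le> pi / 4" by linarith+
  then have A: "0 < A" "A ^ 2 \<le> 1 / 2" "A \<le> 71 / 100"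
    and Ak: "A ^ k \<le> 1 / 4" "A ^ (k + 1) \<le> 1 / 8"
    using absa_bounds[of x] absa_pow_le_half_pow[of x 2 k] absa_pow_le_half_pow[of x 3 "k + 1"] k
    by (simp_all add: A_def power_divide)
  have "A ^ 3 = A * A ^ 2" by (simp add: power2_eq_square power3_eq_cube)
  also have "\<dots> \<le> (71 / 100) * (1 / 2)" using A by (intro mult_mono) auto
  finally have A3: "A ^ 3 \<le> 355 / 1000" by simp
  have sin: "0 \<le> sin x" "sin x \<le> sqrt 2 / 2" and cos: "0 < cos x" "cos x \<le> 1"
    using \<open>0 < x\<close> \<open>x \<le> pi / 4\<close> sin_monotone_2pi_le[of x "pi / 4"]
    by (auto simp: sin_45 intro!: sin_ge_zero cos_gt_zero_pi)
  have "(real k - 1) * x \<le> pi" using x k by (simp add: field_simps)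
  then have sink: "0 \<le> sin ((real k - 1) * x)" "0 \<le> sin ((real k - 2) * x)"
    using \<open>0 < x\<close> k by (auto intro!: sin_ge_zero) (smt (verit) mult_right_mono)
  have "- ((real k - 2) * A ^ 3 * cos ((real k - 2) * x)) \<le> (real k - 2) * A ^ 3"
    using A k mult_left_mono[of "- cos ((real k - 2) * x)" 1 "(real k - 2) * A ^ 3"] by simp
  also have "\<dots> \<le> (real k - 2) * (355 / 1000)"
    using A3 k by (intro mult_left_mono) auto
  finally have t4: "- ((real k - 2) * A ^ 3 * cos ((real k - 2) * x)) \<le> (real k - 2) * (355 / 1000)" .
  have "sin x ^ 2 \<le> 1 / 2"
    using power_mono[OF sin(2), of 2] sin(1) by (simp add: power_divide)
  then have "2 * real k * A ^ (k + 1) * sin x ^ 2 \<le> 2 * real k * (1 / 8) * (1 / 2)"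
    using Ak A by (intro mult_mono) auto
  then have t5: "2 * real k * A ^ (k + 1) * sin x ^ 2 \<le> real k / 8" by simp
  have t6: "A ^ k * cos x \<le> 1 / 4"
    using Ak A cos mult_mono[of "A ^ k" "1 / 4" "cos x" 1] by simp
  have t13: "- 8 * A ^ 5 * sin x * sin ((real k - 1) * x) \<le> 0"
      "0 \<le> 6 * A ^ 4 * sin x * sin ((real k - 2) * x)"
    using A sin sink by simp_all
  have "real k \<ge> 5" using k by simp
  \<comment> \<open>the bounds add up to 1/20 - 3 k / 100\<close>
  then show ?thesis
    using Phi_deriv_leading_term_le[OF k x] t13 t4 t5 t6
    unfolding Phi_deriv_def A_def[symmetric] by argo
qed

lemma Phi_at_left_end_pos:
  assumes k: "k \<ge> 4"
  shows "Phi k (pi / real k) > 0"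
proof -
  define x where "x = pi / real k"
  define A where "A = absa x"
  have "0 < x" "x \<le> pi / 4" using pi_div_le_pi_div_4[of "real k"] k by (auto simp: x_def)
  then have A: "0 < A" "A ^ 2 \<le> 1 / 2" "A ^ 4 \<le> 1 / 4" and "0 < sin x" "0 < cos x"
    using absa_bounds[of x] absa_pow_le_half_pow[of x 2 4]
    by (auto simp: A_def power_divide intro!: sin_gt_zero cos_gt_zero_pi)
  have "(real k - 1) * x = pi - x" "(real k - 2) * x = pi - 2 * x"
    using k by (simp_all add: x_def field_simps)
  moreover have "sin (pi - 2 * x) = 2 * sin x * cos x" by (simp add: sin_double)
  ultimately have "Phi k x = (1 - A ^ 4) * sin x - A ^ 2 * sin x * (2 * A * cos x) + A ^ k * sin x"
    by (simp add: Phi_def A_def power2_eq_square power3_eq_cube)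
  also have "\<dots> = sin x * (1 - A ^ 4 - A ^ 2 + A ^ k)"
    using absa_times_cos[of x] \<open>0 < cos x\<close> by (simp add: A_def algebra_simps)
  finally have "Phi k x = sin x * (1 - A ^ 4 - A ^ 2 + A ^ k)" .
  moreover have "0 < 1 - A ^ 4 - A ^ 2 + A ^ k"
    using A zero_le_power[of A k] by linarith
  ultimately show ?thesis using \<open>0 < sin x\<close> by (simp add: x_def)
qed

lemma Phi_at_right_end_neg:
  assumes k: "k \<ge> 5"
  shows "Phi k (pi / (real k - 1)) < 0"
proof -
  define x where "x = pi / (real k - 1)"
  define A where "A = absa x"
  have "0 < x" "x \<le> pi / 4" using pi_div_le_pi_div_4[of "real k - 1"] k by (auto simp: x_def)
  then have "0 < A" "A < 1" "0 < sin x"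
    using absa_bounds[of x] by (auto simp: A_def intro!: sin_gt_zero)
  have "(real k - 1) * x = pi" "(real k - 2) * x = pi - x"
    using k by (simp_all add: x_def field_simps)
  then have "Phi k x = sin x * (A ^ k - A ^ 3)"
    by (simp add: Phi_def A_def algebra_simps)
  moreover have "A ^ k < A ^ 3"
    using \<open>0 < A\<close> \<open>A < 1\<close> k by (intro power_strict_decreasing) auto
  ultimately show ?thesis using \<open>0 < sin x\<close> by (simp add: x_def mult_pos_neg)
qed

lemma Phi_strict_antimono:
  assumes k: "k \<ge> 5" and "pi / real k \<le> u" "u < v" "v \<le> pi / (real k - 1)"
  shows "Phi k v < Phi k u"
proof (rule DERIV_neg_imp_decreasing[OF \<open>u < v\<close>])
  fix z assume z: "u \<le> z" "z \<le> v"
  have "0 < pi / real k" "pi / (real k - 1) \<le> pi / 4"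
    using pi_div_le_pi_div_4[of "real k"] pi_div_le_pi_div_4[of "real k - 1"] k by auto
  with z assms have "0 < z" "z < pi / 2" by linarith+
  then have "cos z > 0" by (intro cos_gt_zero_pi) auto
  then show "\<exists>y. DERIV (Phi k) z :> y \<and> y < 0"
    using DERIV_Phi[of z k] Phi_deriv_neg[OF k, of z] z assms by auto
qed

lemma eta_bounds:
  assumes k: "k \<ge> 5"
  shows "pi / real k < eta k" "eta k < pi / (real k - 1)"
proof -
  define a where "a = pi / real k"
  define b where "b = pi / (real k - 1)"
  have "0 < a" "a < b" "b \<le> pi / 4"
    using pi_div_le_pi_div_4[of "real k - 1"] k
    by (auto simp: a_def b_def intro!: divide_strict_left_mono)
  have "continuous_on {a..b} (Phi k)"
  proof (intro continuous_at_imp_continuous_on ballI)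
    fix x assume "x \<in> {a..b}"
    then have "cos x > 0"
      using \<open>0 < a\<close> \<open>b \<le> pi / 4\<close> by (intro cos_gt_zero_pi) auto
    then show "isCont (Phi k) x" using DERIV_Phi[of x k] k by (auto intro: DERIV_isCont)
  qed
  moreover have "inj_on (Phi k) {a..b}"
    using Phi_strict_antimono[OF k] by (intro linorder_inj_onI') (fastforce simp: a_def b_def)
  moreover have "Phi k a * Phi k b < 0"
    using Phi_at_left_end_pos[of k] Phi_at_right_end_neg[OF k] k
    by (simp add: a_def b_def mult_pos_neg)
  ultimately have "\<exists>!x. a < x \<and> x < b \<and> Phi k x = 0"
    using ex1_root_sign_change[of a b "Phi k"] \<open>a < b\<close> by simp
  then have "a < (THE x. a < x \<and> x < b \<and> Phi k x = 0) \<and> (THE x. a < x \<and> x < b \<and> Phi k x = 0) < b"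
    by (rule the1I2) auto
  then show "pi / real k < eta k" "eta k < pi / (real k - 1)" by (simp_all add: eta_def a_def b_def)
qed

lemma sin_treble: "sin (3 * x) = sin x * (4 * cos x ^ 2 - 1)" for x :: real
proof -
  have "sin (3 * x) = sin (2 * x + x)" by simp
  also have "\<dots> = 2 * sin x * cos x * cos x + (cos x ^ 2 - sin x ^ 2) * sin x"
    by (simp only: sin_add sin_double cos_double)
  also have "\<dots> = sin x * (4 * cos x ^ 2 - 1)"
    using sin_cos_squared_add[of x] by algebra
  finally show ?thesis .
qed

lemma Phi_4_eq:
  assumes "cos x \<noteq> 0"
  shows "absa x ^ 2 * Phi 4 x = sin x * (1 - absa x ^ 2) * (1 - 2 * absa x ^ 4)"
proof -
  define A where "A = absa x"
  have "2 * A * cos x = 1" using absa_times_cos[OF assms] by (simp add: A_def)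
  moreover have "Phi 4 x = (1 - A ^ 4) * (sin x * (4 * cos x ^ 2 - 1))
      - A ^ 3 * (2 * sin x * cos x) + A ^ 4 * sin x"
    by (simp add: Phi_def A_def sin_treble sin_double)
  ultimately have "A ^ 2 * Phi 4 x = sin x * (1 - A ^ 2) * (1 - 2 * A ^ 4)" by algebra
  then show ?thesis by (simp add: A_def)
qed

lemma Phi_4_eq_0_iff:
  assumes "pi / 4 < x" "x < pi / 3"
  shows "Phi 4 x = 0 \<longleftrightarrow> absa x ^ 4 = 1 / 2"
proof -
  have "0 < cos x" "cos (pi / 3) < cos x" "0 < sin x"
    using assms by (auto intro!: cos_gt_zero_pi cos_monotone_0_pi sin_gt_zero)
  then have "0 < absa x" "absa x < 1"
    by (simp_all add: absa_def cos_60)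
  then have "absa x ^ 2 < 1" by (simp add: power_less_one_iff)
  have "Phi 4 x = 0 \<longleftrightarrow> absa x ^ 2 * Phi 4 x = 0" using \<open>0 < absa x\<close> by simp
  also have "\<dots> \<longleftrightarrow> 1 - 2 * absa x ^ 4 = 0"
    using Phi_4_eq[of x] \<open>0 < cos x\<close> \<open>0 < sin x\<close> \<open>absa x ^ 2 < 1\<close> by simp
  finally show ?thesis by auto
qed

lemma eta_4:
  shows "eta 4 < pi / 3" "absa (eta 4) ^ 4 = 1 / 2"
proof -
  define f where "f x = absa x ^ 4 - 1 / 2" for x
  have abs_lt: "\<bar>x\<bar> < pi / 2" if "x \<in> {pi / 4..pi / 3}" for x
  proof -
    have "pi / 4 \<le> x" "x \<le> pi / 3" using that by auto
    with pi_gt_zero show ?thesis by (simp only: abs_less_iff) linarith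
  qed
  have "continuous_on {pi / 4..pi / 3} f"
  proof (intro continuous_at_imp_continuous_on ballI)
    fix x assume "x \<in> {pi / 4..pi / 3}"
    then have "cos x > 0" using abs_lt[of x] by (intro cos_gt_zero_pi) auto
    then have "isCont absa x" using DERIV_absa[of x] by (auto intro: DERIV_isCont)
    then show "isCont f x" unfolding f_def[abs_def] by (intro continuous_intros)
  qed
  moreover have "inj_on f {pi / 4..pi / 3}"
  proof (intro linorder_inj_onI')
    fix x y assume "x \<in> {pi / 4..pi / 3}" "y \<in> {pi / 4..pi / 3}" "x < y"
    then have "0 < absa x" "absa x < absa y"
      using abs_lt absa_pos pi_gt_zero by (auto intro!: absa_strict_mono)
    then show "f x \<noteq> f y" unfolding f_def using power_strict_mono[of "absa x" "absa y" 4] by auto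
  qed
  moreover have "sqrt 2 ^ 4 = (4 :: real)" using power_mult[of "sqrt 2" 2 2] by simp
  then have "f (pi / 4) * f (pi / 3) < 0"
    by (simp add: f_def absa_def cos_45 cos_60 power_divide)
  ultimately have "\<exists>!x. pi / 4 < x \<and> x < pi / 3 \<and> f x = 0"
    using ex1_root_sign_change[of "pi / 4" "pi / 3" f] by simp
  then have ex1: "\<exists>!x. pi / 4 < x \<and> x < pi / 3 \<and> Phi 4 x = 0"
    using Phi_4_eq_0_iff by (simp add: f_def cong: conj_cong)
  have "real 4 - 1 = 3" by simp
  then have "eta 4 = (THE x. pi / 4 < x \<and> x < pi / 3 \<and> Phi 4 x = 0)"
    by (simp only: eta_def of_nat_numeral)
  with theI'[OF ex1] have "pi / 4 < eta 4 \<and> eta 4 < pi / 3 \<and> Phi 4 (eta 4) = 0"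
    by simp
  then show "eta 4 < pi / 3" "absa (eta 4) ^ 4 = 1 / 2"
    using Phi_4_eq_0_iff by auto
qed

lemma Theta_ge:
  assumes "0 < absa x" "absa x \<le> 1" "m \<le> j"
  shows "(1 - absa x ^ 4) * sin x - absa x ^ (m + 1) \<le> Theta j x"
proof -
  have "absa x ^ (j + 1) \<le> absa x ^ (m + 1)"
    using assms by (intro power_decreasing) auto
  moreover have "- (absa x ^ (j + 1)) \<le> absa x ^ (j + 1) * sin (real j * x)"
    using assms mult_left_mono[of "- sin (real j * x)" 1 "absa x ^ (j + 1)"] by simp
  ultimately show ?thesis unfolding Theta_def by linarith
qed

lemma real_mult_pow_71_le_1: "6 \<le> n \<Longrightarrow> real n * (71 / 100) ^ n \<le> 1"
proof (induction n rule: dec_induct)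
  case base
  then show ?case by (simp add: power_divide)
next
  case (step n)
  have "real (Suc n) * (71 / 100) ^ Suc n = (71 / 100 * real (Suc n)) * (71 / 100) ^ n" by simp
  also have "\<dots> \<le> real n * (71 / 100) ^ n" using step(1) by (intro mult_right_mono) auto
  finally show ?case using step by linarith
qed

lemma Theta_pos_small_angle:
  assumes k: "k \<ge> 5" and x: "pi / (real k + 1) < x" "x < pi / (real k - 1)" and j: "k \<le> j"
  shows "0 < Theta j x"
proof -
  define A where "A = absa x"
  have "0 < pi / (real k + 1)" "pi / (real k - 1) \<le> pi / 4"
    using pi_div_le_pi_div_4[of "real k - 1"] k by auto
  with x have "0 < x" "x \<le> pi / 4" by linarith+
  then have A: "0 < A" "A \<le> 71 / 100" and A4: "A ^ 4 \<le> 1 / 4"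
    using absa_bounds[of x] absa_pow_le_half_pow[of x 2 4] by (auto simp: A_def power_divide)
  have "x ^ 3 \<le> x" using \<open>0 < x\<close> \<open>x \<le> pi / 4\<close> pi_less_4
    by (intro power_decreasing[of 1 3 x, simplified]) auto
  then have "5 / 6 * x \<le> sin x" using sin_ge_cubic[of x] \<open>0 < x\<close> by linarith
  then have "3 / 4 * (5 / 6 * x) \<le> (1 - A ^ 4) * sin x"
    using A4 \<open>0 < x\<close> by (intro mult_mono) auto
  moreover have "2 / (real k + 1) < x"
    using x pi_ge_two divide_right_mono[of 2 pi "real k + 1"] by linarith
  ultimately have lower: "5 / 4 / (real k + 1) < (1 - A ^ 4) * sin x" by linarith
  have "A ^ (k + 1) \<le> (71 / 100) ^ (k + 1)" using A by (intro power_mono) auto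
  also have "\<dots> \<le> 1 / (real k + 1)"
    using real_mult_pow_71_le_1[of "k + 1"] k by (simp add: field_simps)
  also have "\<dots> < 5 / 4 / (real k + 1)" by (intro divide_strict_right_mono) auto
  finally have upper: "A ^ (k + 1) < 5 / 4 / (real k + 1)" .
  show ?thesis
    using Theta_ge[of x k j] A j lower upper by (simp add: A_def)
qed

lemma Theta_4_eq:
  assumes "cos x \<noteq> 0"
  shows "Theta 4 x = sin x * (1 + absa x ^ 2 - 3 * absa x ^ 4)"
proof -
  define A where "A = absa x"
  have "2 * A * cos x = 1" using absa_times_cos[OF assms] by (simp add: A_def)
  moreover have "sin (4 * x) = 2 * sin (2 * x) * cos (2 * x)"
    using sin_double[of "2 * x"] by simp
  then have "sin (4 * x) = 4 * sin x * cos x * (2 * cos x ^ 2 - 1)"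
    by (simp add: sin_double cos_double_cos)
  ultimately have "Theta 4 x = sin x * (1 + A ^ 2 - 3 * A ^ 4)"
    by (simp add: Theta_def A_def[symmetric]) algebra
  then show ?thesis by (simp add: A_def)
qed

lemma Theta_4_pos:
  assumes x: "0 < x" "x < pi / 2" and A4: "absa x ^ 4 < 1 / 2"
  shows "0 < Theta 4 x"
proof -
  define t where "t = absa x ^ 2"
  have "0 < cos x" "0 < sin x" using x by (auto intro!: cos_gt_zero_pi sin_gt_zero)
  then have "0 < t" by (simp add: t_def absa_def)
  have "t ^ 2 < 1 / 2" using A4 by (simp add: t_def flip: power_mult)
  have "0 < 1 + t - 3 * t ^ 2"
  proof (cases "t \<le> 1 / 2")
    case True
    then have "t ^ 2 \<le> (1 / 2) ^ 2" using \<open>0 < t\<close> by (intro power_mono) auto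
    then show ?thesis using \<open>0 < t\<close> by (simp add: power2_eq_square)
  next
    case False
    then show ?thesis using \<open>t ^ 2 < 1 / 2\<close> by linarith
  qed
  then show ?thesis
    using Theta_4_eq[of x] \<open>0 < cos x\<close> \<open>0 < sin x\<close> by (simp add: t_def flip: power_mult)
qed

lemma sin_gt_if_absa_sq_gt:
  assumes "0 < sin x" "0 < cos x" "3 / 5 < absa x ^ 2"
  shows "76 / 100 < sin x"
proof -
  have "2 * absa x * cos x = 1" using absa_times_cos[of x] assms(2) by simp
  then have "4 * absa x ^ 2 * cos x ^ 2 = 1" by algebra
  moreover have "0 < absa x ^ 2" using assms(3) by linarith
  ultimately have "cos x ^ 2 = 1 / (4 * absa x ^ 2)" by (simp add: field_simps)
  also have "\<dots> < 1 / (4 * (3 / 5))" using assms(3) by (intro divide_strict_left_mono) auto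
  finally have "(76 / 100) ^ 2 < sin x ^ 2"
    using sin_cos_squared_add[of x] by (simp add: power2_eq_square)
  then show ?thesis
    using assms(1) by (smt (verit) power_mono)
qed

lemma Theta_pos_large_angle:
  assumes x: "pi / 5 < x" "x < pi / 3" and A4: "absa x ^ 4 < 1 / 2" and j: "5 \<le> j"
  shows "0 < Theta j x"
proof -
  define t where "t = absa x ^ 2"
  have "0 < x" using x pi_gt_zero by linarith
  then have "0 < cos x" "cos (pi / 3) < cos x" "0 < sin x"
    using x by (auto intro!: cos_gt_zero_pi cos_monotone_0_pi sin_gt_zero)
  then have "0 < absa x" "absa x < 1" by (simp_all add: absa_def cos_60)
  then have "(1 - t ^ 2) * sin x - t ^ 3 \<le> Theta j x"
    using Theta_ge[of x 5 j] j by (simp add: t_def flip: power_mult)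
  moreover have "0 < t" "t ^ 2 < 1 / 2"
    using \<open>0 < absa x\<close> A4 by (simp_all add: t_def flip: power_mult)
  moreover have "t ^ 3 < (1 - t ^ 2) * sin x"
  proof (cases "t \<le> 6 / 10")
    case True
    have "sin (pi / 6) \<le> sin x" using x by (intro sin_monotone_2pi_le) auto
    then have "1 / 2 \<le> sin x" by (simp add: sin_30)
    moreover have "t ^ 2 \<le> (6 / 10) ^ 2" "t ^ 3 \<le> (6 / 10) ^ 3"
      using True \<open>0 < t\<close> by (intro power_mono; simp)+
    ultimately have "64 / 100 * (1 / 2) \<le> (1 - t ^ 2) * sin x" "t ^ 3 \<le> 216 / 1000"
      by (intro mult_mono, auto simp: power2_eq_square power3_eq_cube)
    then show ?thesis by linarith
  next
    case False
    then have "1 / 2 * (76 / 100) \<le> (1 - t ^ 2) * sin x"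
      using sin_gt_if_absa_sq_gt[of x] \<open>0 < sin x\<close> \<open>0 < cos x\<close> \<open>t ^ 2 < 1 / 2\<close>
      by (intro mult_mono) (auto simp: t_def)
    moreover have "t < 7072 / 10000"
    proof (rule ccontr)
      assume "\<not> ?thesis"
      then have "(7072 / 10000) ^ 2 \<le> t ^ 2" by (intro power_mono) auto
      with \<open>t ^ 2 < 1 / 2\<close> show False by (simp add: power2_eq_square)
    qed
    then have "t * t ^ 2 < 7072 / 10000 * (1 / 2)"
      using \<open>0 < t\<close> \<open>t ^ 2 < 1 / 2\<close> by (intro mult_strict_mono) auto
    ultimately show ?thesis by (simp add: power3_eq_cube power2_eq_square)
  qed
  ultimately show ?thesis by linarith
qed

lemma absa_pow_4_lt_half_below_eta_4:
  assumes "0 \<le> x" "x < eta 4"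
  shows "absa x ^ 4 < 1 / 2"
proof -
  have "0 < absa x" "absa x < absa (eta 4)"
    using assms eta_4(1) pi_gt_zero by (auto intro!: absa_pos absa_strict_mono)
  then have "absa x ^ 4 < absa (eta 4) ^ 4" by (intro power_strict_mono) auto
  then show ?thesis by (simp add: eta_4(2))
qed

theorem lemma4p3:
  fixes k j :: nat and \<eta> :: real
  assumes "k \<ge> 4" and "eta (k + 1) \<le> \<eta>" and "\<eta> < eta k" and "j \<ge> k"
  shows "Theta j \<eta> > 0"
proof (cases "k = 4")
  case True
  have "pi / 5 < \<eta>" "\<eta> < pi / 3"
    using eta_bounds(1)[of 5] eta_4(1) assms(2,3) True by simp_all
  have "0 \<le> \<eta>" using \<open>pi / 5 < \<eta>\<close> pi_gt_zero by linarith
  then have "absa \<eta> ^ 4 < 1 / 2"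
    using absa_pow_4_lt_half_below_eta_4 assms(3) True by simp
  with \<open>pi / 5 < \<eta>\<close> \<open>\<eta> < pi / 3\<close> show ?thesis
    using Theta_4_pos[of \<eta>] Theta_pos_large_angle[of \<eta> j] assms(4) True pi_gt_zero
    by (cases "j = 4") auto
next
  case False
  then have "k \<ge> 5" using assms(1) by simp
  then have "pi / (real k + 1) < \<eta>" "\<eta> < pi / (real k - 1)"
    using eta_bounds(1)[of "k + 1"] eta_bounds(2)[of k] assms(2,3) by (simp_all add: add.commute)
  then show ?thesis using Theta_pos_small_angle \<open>k \<ge> 5\<close> assms(4) by blast
qed

end
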